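(* For each partial computable function $f:\mathbb{N}\to\mathbb{N}$ there exists a constant $c_f$ such that for all $n$ in the domain of $f$, $\alpha(\alpha(f(n)))\le \alpha(n)+c_f$.
   Context: Natural numbers are identified with finite binary strings. $\mathrm{K}$ denotes prefix-free Kolmogorov complexity with respect to a fixed optimal prefix-free machine $\mathbb{U}'$: $\mathrm{K}(x)=\min\{|y|:\mathbb{U}'(y)=x\}$, where $\mathbb{U}'$ has prefix-free domain and for every prefix-free machine $T$ there is $c_T$ with $\mathrm{K}(x)\le \min\{|y|:T(y)=x\}+c_T$. Solovay's $\alpha$-function is $\alpha(n)=\min\{\mathrm{K}(i) : i>n\}$. *)

theory Defs
  imports Main "HOL-Library.Sublist"
begin

datatype recf = Zero | Succ | Proj nat | Comp recf "recf list" | Prec recf recf | Mn recf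

inductive eval :: "recf \<Rightarrow> nat list \<Rightarrow> nat \<Rightarrow> bool" where
  eval_Zero: "eval Zero xs 0"
| eval_Succ: "eval Succ (x # xs) (Suc x)"
| eval_Proj: "i < length xs \<Longrightarrow> eval (Proj i) xs (xs ! i)"
| eval_Comp: "list_all2 (\<lambda>g y. eval g xs y) gs ys \<Longrightarrow> eval f ys z \<Longrightarrow> eval (Comp f gs) xs z"
| eval_Prec0: "eval f xs z \<Longrightarrow> eval (Prec f g) (0 # xs) z"
| eval_PrecS: "eval (Prec f g) (n # xs) y \<Longrightarrow> eval g (y # n # xs) z
               \<Longrightarrow> eval (Prec f g) (Suc n # xs) z"
| eval_Mn: "eval f (n # xs) 0 \<Longrightarrow> (\<forall>m<n. \<exists>y. eval f (m # xs) (Suc y))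
            \<Longrightarrow> eval (Mn f) xs n"

definition partial_computable :: "(nat \<Rightarrow> nat option) \<Rightarrow> bool" where
  "partial_computable f \<longleftrightarrow> (\<exists>r. \<forall>n y. eval r [n] y \<longleftrightarrow> f n = Some y)"

text \<open>Standard bijection: n corresponds to the binary expansion of n+1 with the
  leading 1 removed (0 = empty string, 1 = "0", 2 = "1", 3 = "00", ...).\<close>
fun bits :: "nat \<Rightarrow> bool list" where
  "bits n = (if n \<le> 1 then [] else bits (n div 2) @ [odd n])"

definition str :: "nat \<Rightarrow> bool list" where
  "str n = bits (Suc n)"

definition slen :: "nat \<Rightarrow> nat" where
  "slen n = length (str n)"

definition prefix_free_machine :: "(nat \<Rightarrow> nat option) \<Rightarrow> bool" where
  "prefix_free_machine M \<longleftrightarrow> partial_computable M \<and>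
     (\<forall>x y. M x \<noteq> None \<longrightarrow> M y \<noteq> None \<longrightarrow> prefix (str x) (str y) \<longrightarrow> x = y)"

definition optimal_pf_machine :: "(nat \<Rightarrow> nat option) \<Rightarrow> bool" where
  "optimal_pf_machine U \<longleftrightarrow> prefix_free_machine U \<and>
     (\<forall>T. prefix_free_machine T \<longrightarrow> (\<exists>c. \<forall>x y. T y = Some x \<longrightarrow>
        (\<exists>y'. U y' = Some x \<and> slen y' \<le> slen y + c)))"

definition K :: "(nat \<Rightarrow> nat option) \<Rightarrow> nat \<Rightarrow> nat" where
  "K U x = (LEAST k. \<exists>y. U y = Some x \<and> slen y = k)"

definition alpha :: "(nat \<Rightarrow> nat option) \<Rightarrow> nat \<Rightarrow> nat" where
  "alpha U n = (LEAST k. \<exists>i>n. K U i = k)"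

end

theory Submission
  imports Defs
begin

text \<open>Feed the function to an optimal prefix-free machine in unary: the code word
  \<open>0\<^sup>n1\<close> of length \<open>n + 1\<close> describes \<open>f n + 1\<close>, so \<open>K (m + 1) \<le> n + c\<close> and hence
  \<open>\<alpha> m \<le> n + c\<close> whenever \<open>f n = m\<close>. Since \<open>\<alpha>\<close> is monotone it remains to see
  \<open>\<alpha> (n + c) \<le> \<alpha> n + c'\<close>: if \<open>i > n\<close> attains \<open>\<alpha> n = K i\<close>, then \<open>i + c > n + c\<close> and
  \<open>K (i + c) \<le> K i + c'\<close>, because adding a constant to the output of an optimal
  machine is again a prefix-free machine.\<close>

lemma eval_Zero_iff: "eval Zero xs z \<longleftrightarrow> z = 0"
  by (auto elim: eval.cases intro: eval.intros)

lemma eval_Succ_iff: "eval Succ (x # xs) z \<longleftrightarrow> z = Suc x"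
  by (auto elim: eval.cases intro: eval.intros)

lemma eval_Proj_iff: "eval (Proj i) xs z \<longleftrightarrow> i < length xs \<and> z = xs ! i"
  by (auto elim: eval.cases intro: eval.intros)

lemma eval_Comp_iff:
  "eval (Comp f gs) xs z \<longleftrightarrow> (\<exists>ys. list_all2 (\<lambda>g y. eval g xs y) gs ys \<and> eval f ys z)"
  by (auto elim: eval.cases intro: eval.intros)

lemma eval_Prec0_iff: "eval (Prec f g) (0 # xs) z \<longleftrightarrow> eval f xs z"
  by (auto elim: eval.cases intro: eval.intros)

lemma eval_PrecS_iff:
  "eval (Prec f g) (Suc n # xs) z \<longleftrightarrow> (\<exists>y. eval (Prec f g) (n # xs) y \<and> eval g (y # n # xs) z)"
  by (auto elim: eval.cases intro: eval.intros)

lemma eval_Mn_iff: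
  "eval (Mn f) xs n \<longleftrightarrow> eval f (n # xs) 0 \<and> (\<forall>m<n. \<exists>y. eval f (m # xs) (Suc y))"
  by (auto elim: eval.cases intro: eval.intros)

lemmas eval_simps = eval_Zero_iff eval_Succ_iff eval_Proj_iff eval_Comp_iff
  eval_Prec0_iff eval_PrecS_iff list_all2_Cons1

definition rec_add :: recf where
  "rec_add = Prec (Proj 0) (Comp Succ [Proj 0])"

lemma eval_rec_add: "eval rec_add [a, b] z \<longleftrightarrow> z = a + b"
  unfolding rec_add_def by (induction a arbitrary: z) (auto simp: eval_simps)

definition rec_pred :: recf where
  "rec_pred = Prec Zero (Proj 1)"

lemma eval_rec_pred: "eval rec_pred [a] z \<longleftrightarrow> z = a - 1"
  unfolding rec_pred_def by (induction a arbitrary: z) (auto simp: eval_simps)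

definition rec_monus :: recf where
  "rec_monus = Prec (Proj 0) (Comp rec_pred [Proj 0])"

lemma eval_rec_monus: "eval rec_monus [a, b] z \<longleftrightarrow> z = b - a"
  unfolding rec_monus_def
  by (induction a arbitrary: z) (auto simp: eval_simps eval_rec_pred)

definition rec_pow2 :: recf where
  "rec_pow2 = Prec (Comp Succ [Comp Succ [Zero]]) (Comp rec_add [Proj 0, Proj 0])"

lemma eval_rec_pow2: "eval rec_pow2 [n, x] z \<longleftrightarrow> z = 2 ^ Suc n"
  unfolding rec_pow2_def
  by (induction n arbitrary: z) (auto simp: eval_simps eval_rec_add)

definition rec_dist_pow2 :: recf where
  "rec_dist_pow2 = Comp rec_add [Comp rec_monus [Proj 1, rec_pow2], Comp rec_monus [rec_pow2, Proj 1]]"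

lemma eval_rec_dist_pow2:
  "eval rec_dist_pow2 [n, x] z \<longleftrightarrow> z = (2 ^ Suc n - x) + (x - 2 ^ Suc n)"
  unfolding rec_dist_pow2_def
  by (auto simp: eval_simps eval_rec_add eval_rec_monus eval_rec_pow2)

lemma eval_Mn_rec_dist_pow2: "eval (Mn rec_dist_pow2) [x] n \<longleftrightarrow> x = 2 ^ Suc n"
proof -
  have dist_eq_0: "(a - b) + (b - a) = 0 \<longleftrightarrow> a = b" for a b :: nat
    by auto
  have ex_Suc_eq: "(\<exists>y. Suc y = v) \<longleftrightarrow> v \<noteq> 0" for v :: nat
    by (cases v) simp_all
  have "eval (Mn rec_dist_pow2) [x] n \<longleftrightarrow> 2 ^ Suc n = x \<and> (\<forall>m<n. 2 ^ Suc m \<noteq> x)"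
    by (simp only: eval_Mn_iff eval_rec_dist_pow2 ex_Suc_eq dist_eq_0 eq_commute[of 0])
  also have "\<dots> \<longleftrightarrow> x = 2 ^ Suc n"
    by (auto simp: power_inject_exp)
  finally show ?thesis .
qed

fun rec_plus_const :: "nat \<Rightarrow> recf \<Rightarrow> recf" where
  "rec_plus_const 0 r = r"
| "rec_plus_const (Suc k) r = Comp Succ [rec_plus_const k r]"

lemma eval_rec_plus_const:
  "eval (rec_plus_const k r) xs z \<longleftrightarrow> (\<exists>v. eval r xs v \<and> z = v + k)"
proof (induction k arbitrary: z)
  case (Suc k)
  have "eval (rec_plus_const (Suc k) r) xs z \<longleftrightarrow> (\<exists>w. eval (rec_plus_const k r) xs w \<and> z = Suc w)"
    by (auto simp: eval_simps)
  with Suc.IH show ?case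
    by auto
qed simp

lemma partial_computable_const: "partial_computable (\<lambda>_. Some k)"
  unfolding partial_computable_def
  by (rule exI[of _ "rec_plus_const k Zero"]) (auto simp: eval_rec_plus_const eval_Zero_iff)

lemma partial_computable_plus_const:
  assumes "partial_computable g"
  shows "partial_computable (\<lambda>x. map_option (\<lambda>v. v + k) (g x))"
proof -
  obtain r where "\<And>n y. eval r [n] y \<longleftrightarrow> g n = Some y"
    using assms unfolding partial_computable_def by blast
  then have "eval (rec_plus_const k r) [n] y \<longleftrightarrow> map_option (\<lambda>v. v + k) (g n) = Some y" for n y
    by (auto simp: eval_rec_plus_const)
  then show ?thesis
    unfolding partial_computable_def by blast
qed

lemma prefix_free_machine_plus_const:
  assumes "prefix_free_machine M"
  shows "prefix_free_machine (\<lambda>x. map_option (\<lambda>v. v + k) (M x))"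
  using assms partial_computable_plus_const unfolding prefix_free_machine_def by simp

definition unary_code :: "nat \<Rightarrow> nat" where
  "unary_code n = 2 ^ Suc n"

lemma inj_unary_code: "inj unary_code"
  by (rule injI) (simp add: unary_code_def power_inject_exp)

declare bits.simps [simp del]

lemma bits_pow2: "bits (2 ^ k) = replicate k False"
proof (induction k)
  case 0
  then show ?case by (subst bits.simps) simp
next
  case (Suc k)
  have "\<not> (2::nat) ^ Suc k \<le> 1"
    using one_less_power[of "2::nat" "Suc k"] by simp
  then have "bits (2 ^ Suc k) = bits (2 ^ k) @ [False]"
    by (subst bits.simps) simp
  with Suc show ?case
    by (simp add: replicate_append_same)
qed

lemma str_unary_code: "str (unary_code n) = replicate n False @ [True]"
proof -
  have "bits (Suc (2 ^ Suc n)) = bits (2 ^ n) @ [True]"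
    by (subst bits.simps) simp
  then show ?thesis
    by (simp add: str_def unary_code_def bits_pow2)
qed

lemma slen_unary_code: "slen (unary_code n) = Suc n"
  by (simp add: slen_def str_unary_code)

lemma prefix_unary_code_imp_eq:
  "prefix (str (unary_code a)) (str (unary_code b)) \<Longrightarrow> a = b"
  unfolding str_unary_code
proof (induction a arbitrary: b)
  case 0
  then show ?case by (cases b) simp_all
next
  case (Suc a)
  obtain b' where b: "b = Suc b'"
    using Suc.prems by (cases b) simp_all
  with Suc.prems have "a = b'"
    by (intro Suc.IH) simp
  with b show ?case by simp
qed

definition unary_machine :: "(nat \<Rightarrow> nat option) \<Rightarrow> nat \<Rightarrow> nat option" where
  "unary_machine g x = (if x \<in> range unary_code then g (inv unary_code x) else None)"

lemma unary_machine_eq_Some: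
  "unary_machine g x = Some z \<longleftrightarrow> (\<exists>n. x = unary_code n \<and> g n = Some z)"
  by (auto simp: unary_machine_def inv_f_f[OF inj_unary_code])

lemma prefix_free_machine_unary_machine:
  assumes "partial_computable g"
  shows "prefix_free_machine (unary_machine g)"
  unfolding prefix_free_machine_def
proof (intro conjI allI impI)
  obtain r where r: "\<And>n y. eval r [n] y \<longleftrightarrow> g n = Some y"
    using assms unfolding partial_computable_def by blast
  have "eval (Comp r [Mn rec_dist_pow2]) [x] z \<longleftrightarrow> unary_machine g x = Some z" for x z
    by (auto simp: eval_Comp_iff list_all2_Cons1 eval_Mn_rec_dist_pow2 r unary_machine_eq_Some unary_code_def)
  then show "partial_computable (unary_machine g)"
    unfolding partial_computable_def by blast
next
  fix x y
  assume "unary_machine g x \<noteq> None" "unary_machine g y \<noteq> None" "prefix (str x) (str y)"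
  moreover obtain a b where "x = unary_code a" "y = unary_code b"
    using \<open>unary_machine g x \<noteq> None\<close> \<open>unary_machine g y \<noteq> None\<close>
    by (metis not_None_eq unary_machine_eq_Some)
  ultimately show "x = y"
    using prefix_unary_code_imp_eq by blast
qed

lemma optimal_pf_machineD:
  assumes "optimal_pf_machine U" "prefix_free_machine T"
  obtains c where "\<And>x y. T y = Some x \<Longrightarrow> \<exists>y'. U y' = Some x \<and> slen y' \<le> slen y + c"
  using assms unfolding optimal_pf_machine_def by metis

lemma optimal_pf_machine_surj:
  assumes "optimal_pf_machine U"
  shows "\<exists>y. U y = Some x"
proof -
  have "prefix_free_machine (unary_machine (\<lambda>_. Some x))"
    by (rule prefix_free_machine_unary_machine[OF partial_computable_const])
  with assms obtain c where
    "\<And>z y. unary_machine (\<lambda>_. Some x) y = Some z \<Longrightarrow> \<exists>y'. U y' = Some z \<and> slen y' \<le> slen y + c"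
    by (rule optimal_pf_machineD) blast
  from this[of "unary_code 0" x] show ?thesis
    by (auto simp: unary_machine_eq_Some)
qed

lemma K_le: "U y = Some x \<Longrightarrow> K U x \<le> slen y"
  unfolding K_def by (rule Least_le) blast

lemma K_attained:
  assumes "U y0 = Some x"
  obtains y where "U y = Some x" "slen y = K U x"
proof -
  have "\<exists>y. U y = Some x \<and> slen y = K U x"
    unfolding K_def by (rule LeastI_ex) (use assms in blast)
  with that show ?thesis by blast
qed

lemma optimal_pf_machine_K_le:
  assumes "optimal_pf_machine U" "prefix_free_machine T"
  obtains c where "\<And>x y. T y = Some x \<Longrightarrow> K U x \<le> slen y + c"
proof -
  obtain c where "\<And>x y. T y = Some x \<Longrightarrow> \<exists>y'. U y' = Some x \<and> slen y' \<le> slen y + c"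
    using optimal_pf_machineD[OF assms] by blast
  then have "K U x \<le> slen y + c" if "T y = Some x" for x y
    using that K_le le_trans by blast
  then show ?thesis by (rule that)
qed

lemma K_plus_const_le:
  assumes "optimal_pf_machine U"
  obtains c where "\<And>x. K U (x + k) \<le> K U x + c"
proof -
  have "prefix_free_machine (\<lambda>y. map_option (\<lambda>v. v + k) (U y))"
    using assms prefix_free_machine_plus_const unfolding optimal_pf_machine_def by blast
  with assms obtain c where c: "\<And>x y. map_option (\<lambda>v. v + k) (U y) = Some x \<Longrightarrow> K U x \<le> slen y + c"
    by (rule optimal_pf_machine_K_le) blast
  have "K U (x + k) \<le> K U x + c" for x
  proof -
    obtain y where "U y = Some x" "slen y = K U x"
      using optimal_pf_machine_surj[OF assms] K_attained by blast
    with c[of y "x + k"] show ?thesis by simp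
  qed
  then show ?thesis by (rule that)
qed

lemma K_unary_le:
  assumes "optimal_pf_machine U" "partial_computable g"
  obtains c where "\<And>n m. g n = Some m \<Longrightarrow> K U m \<le> n + c"
proof -
  obtain c where c: "\<And>x y. unary_machine g y = Some x \<Longrightarrow> K U x \<le> slen y + c"
    using optimal_pf_machine_K_le[OF assms(1) prefix_free_machine_unary_machine[OF assms(2)]] by blast
  have "K U m \<le> n + Suc c" if "g n = Some m" for n m
    using c[of "unary_code n" m] that by (auto simp: unary_machine_eq_Some slen_unary_code)
  then show ?thesis by (rule that)
qed

lemma alpha_le_K: "n < i \<Longrightarrow> alpha U n \<le> K U i"
  unfolding alpha_def by (rule Least_le) blast

lemma alpha_attained: "\<exists>i>n. K U i = alpha U n"
  unfolding alpha_def by (rule LeastI_ex) (rule exI[of _ "K U (Suc n)"], auto)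

lemma alpha_mono:
  assumes "a \<le> b"
  shows "alpha U a \<le> alpha U b"
proof -
  obtain i where "b < i" "K U i = alpha U b"
    using alpha_attained by blast
  with assms show ?thesis
    using alpha_le_K[of a i U] by simp
qed

lemma alpha_plus_const_le:
  assumes "optimal_pf_machine U"
  obtains c where "\<And>n. alpha U (n + k) \<le> alpha U n + c"
proof -
  obtain c where c: "\<And>x. K U (x + k) \<le> K U x + c"
    using K_plus_const_le[OF assms, of k] by blast
  have "alpha U (n + k) \<le> alpha U n + c" for n
  proof -
    obtain i where "n < i" "K U i = alpha U n"
      using alpha_attained by blast
    then show ?thesis
      using alpha_le_K[of "n + k" "i + k" U] c[of i] by simp
  qed
  then show ?thesis by (rule that)
qed

theorem lemma2:
  fixes U f :: "nat \<Rightarrow> nat option"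
  assumes "optimal_pf_machine U"
    and "partial_computable f"
  shows "\<exists>c. \<forall>n m. f n = Some m \<longrightarrow> alpha U (alpha U m) \<le> alpha U n + c"
proof -
  obtain d where d: "\<And>n m. map_option (\<lambda>v. v + 1) (f n) = Some m \<Longrightarrow> K U m \<le> n + d"
    using K_unary_le[OF assms(1) partial_computable_plus_const[OF assms(2)]] by blast
  have alpha_le: "alpha U m \<le> n + d" if "f n = Some m" for n m
  proof -
    have "alpha U m \<le> K U (m + 1)"
      by (rule alpha_le_K) simp
    also have "\<dots> \<le> n + d"
      using d[of n "m + 1"] that by simp
    finally show ?thesis .
  qed
  obtain c where c: "\<And>n. alpha U (n + d) \<le> alpha U n + c"
    using alpha_plus_const_le[OF assms(1), of d] by blast
  have "alpha U (alpha U m) \<le> alpha U n + c" if "f n = Some m" for n m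
    using alpha_mono[OF alpha_le[OF that]] c[of n] by (rule le_trans)
  then show ?thesis by blast
qed

end
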